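(* Let $\mathfrak S=(S,\xrightarrow{F},\le)$ be a complete functional WSTS. For any subset $A$ of $S$, $Post^*_{\mathfrak S}(cl(A))\subseteq cl(Post^*_{\mathfrak S}(A))$.
   Context: A complete functional WSTS: $(S,\le)$ is a well partial order which is a continuous dcpo, $F$ is a finite set of partial continuous maps $f:S\rightharpoonup S$ (domain Scott-open; $f(\bigvee D)=\bigvee f(D)$ for every directed $D\subseteq\operatorname{dom}f$), and $s\to s'$ iff $s'=f(s)$ for some $f\in F$. $Post^*_{\mathfrak S}(A)$ is the set of states reachable from elements of $A$ in zero or more steps. $cl$ denotes closure in the Scott topology (open sets: upward-closed $U$ meeting every directed set whose lub lies in $U$). *)

theory Defs
  imports Main
begin

text \<open>The state space S is the carrier type 'a, ordered by the class order (\<le>).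
  Partial maps S \<rightharpoonup> S are functions 'a \<Rightarrow> 'a option.\<close>

definition wpo :: "('a::order) itself \<Rightarrow> bool" where
  "wpo _ \<longleftrightarrow> (\<forall>g :: nat \<Rightarrow> 'a. \<exists>i j. i < j \<and> g i \<le> g j)"

definition directed :: "('a::order) set \<Rightarrow> bool" where
  "directed D \<longleftrightarrow> D \<noteq> {} \<and> (\<forall>x\<in>D. \<forall>y\<in>D. \<exists>z\<in>D. x \<le> z \<and> y \<le> z)"

definition is_lub :: "('a::order) set \<Rightarrow> 'a \<Rightarrow> bool" where
  "is_lub D x \<longleftrightarrow> (\<forall>d\<in>D. d \<le> x) \<and> (\<forall>u. (\<forall>d\<in>D. d \<le> u) \<longrightarrow> x \<le> u)"

definition dcpo :: "('a::order) itself \<Rightarrow> bool" where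
  "dcpo _ \<longleftrightarrow> (\<forall>D :: 'a set. directed D \<longrightarrow> (\<exists>x. is_lub D x))"

definition way_below :: "'a::order \<Rightarrow> 'a \<Rightarrow> bool" where
  "way_below x y \<longleftrightarrow>
     (\<forall>D z. directed D \<longrightarrow> is_lub D z \<longrightarrow> y \<le> z \<longrightarrow> (\<exists>d\<in>D. x \<le> d))"

definition continuous_dcpo :: "('a::order) itself \<Rightarrow> bool" where
  "continuous_dcpo T \<longleftrightarrow> dcpo T \<and>
     (\<forall>x :: 'a. directed {y. way_below y x} \<and> is_lub {y. way_below y x} x)"

definition scott_open :: "('a::order) set \<Rightarrow> bool" where
  "scott_open U \<longleftrightarrow> (\<forall>x\<in>U. \<forall>y. x \<le> y \<longrightarrow> y \<in> U) \<and>
     (\<forall>D x. directed D \<longrightarrow> is_lub D x \<longrightarrow> x \<in> U \<longrightarrow> D \<inter> U \<noteq> {})"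

definition scott_closed :: "('a::order) set \<Rightarrow> bool" where
  "scott_closed C \<longleftrightarrow> scott_open (- C)"

definition scott_cl :: "('a::order) set \<Rightarrow> 'a set" where
  "scott_cl A = \<Inter>{C. scott_closed C \<and> A \<subseteq> C}"

definition partial_continuous :: "('a::order \<Rightarrow> 'a option) \<Rightarrow> bool" where
  "partial_continuous f \<longleftrightarrow> scott_open (dom f) \<and>
     (\<forall>D x. directed D \<longrightarrow> D \<subseteq> dom f \<longrightarrow> is_lub D x \<longrightarrow>
        is_lub ((\<lambda>d. the (f d)) ` D) (the (f x)))"

definition complete_functional_wsts :: "('a::order \<Rightarrow> 'a option) set \<Rightarrow> bool" where
  "complete_functional_wsts F \<longleftrightarrow> wpo TYPE('a) \<and> continuous_dcpo TYPE('a) \<and>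
     finite F \<and> (\<forall>f\<in>F. partial_continuous f)"

definition step_rel :: "('a \<Rightarrow> 'a option) set \<Rightarrow> ('a \<times> 'a) set" where
  "step_rel F = {(s, s'). \<exists>f\<in>F. f s = Some s'}"

definition post_star :: "('a \<Rightarrow> 'a option) set \<Rightarrow> 'a set \<Rightarrow> 'a set" where
  "post_star F A = {s'. \<exists>s\<in>A. (s, s') \<in> (step_rel F)\<^sup>*}"

end

theory Submission
  imports Defs
begin

text \<open>Each map in F is Scott-continuous, so the preimage of the Scott-closed set
  cl(Post*(A)) under it is again Scott-closed. This preimage contains Post*(A), hence also
  cl(Post*(A)): the closure is closed under the transition relation. As it also contains
  cl(A), it contains every state reachable from cl(A).\<close>

lemma scott_open_upward:
  "scott_open U \<Longrightarrow> x \<in> U \<Longrightarrow> x \<le> y \<Longrightarrow> y \<in> U"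
  unfolding scott_open_def by blast

lemma scott_open_meets_directed:
  "scott_open U \<Longrightarrow> directed D \<Longrightarrow> is_lub D x \<Longrightarrow> x \<in> U \<Longrightarrow> D \<inter> U \<noteq> {}"
  unfolding scott_open_def by blast

lemma scott_open_Union:
  assumes "\<And>U. U \<in> K \<Longrightarrow> scott_open U"
  shows "scott_open (\<Union>K)"
  unfolding scott_open_def
proof (intro conjI ballI allI impI)
  fix x y assume "x \<in> \<Union>K" "x \<le> y"
  then obtain U where "U \<in> K" "x \<in> U" by blast
  then show "y \<in> \<Union>K" using assms scott_open_upward \<open>x \<le> y\<close> by blast
next
  fix D x assume "directed D" "is_lub D x" "x \<in> \<Union>K"
  then obtain U where "U \<in> K" "D \<inter> U \<noteq> {}"
    using assms scott_open_meets_directed by blast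
  then show "D \<inter> \<Union>K \<noteq> {}" by blast
qed

lemma scott_closed_scott_cl: "scott_closed (scott_cl A)"
proof -
  let ?K = "{C. scott_closed C \<and> A \<subseteq> C}"
  have "- scott_cl A = \<Union>(uminus ` ?K)" unfolding scott_cl_def by blast
  moreover have "scott_open (\<Union>(uminus ` ?K))"
    by (rule scott_open_Union) (auto simp: scott_closed_def)
  ultimately show ?thesis unfolding scott_closed_def by simp
qed

lemma scott_cl_least: "scott_closed C \<Longrightarrow> A \<subseteq> C \<Longrightarrow> scott_cl A \<subseteq> C"
  unfolding scott_cl_def by blast

lemma scott_cl_subset: "A \<subseteq> scott_cl A"
  unfolding scott_cl_def by blast

lemma scott_cl_mono: "A \<subseteq> B \<Longrightarrow> scott_cl A \<subseteq> scott_cl B"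
  by (meson scott_cl_least scott_closed_scott_cl scott_cl_subset order_trans)

lemma partial_continuous_mono:
  assumes f: "partial_continuous f" and "f x = Some a" "x \<le> y"
  obtains b where "f y = Some b" "a \<le> b"
proof -
  have "scott_open (dom f)" using f unfolding partial_continuous_def by blast
  then have "y \<in> dom f" using assms(2,3) scott_open_upward by blast
  then obtain b where b: "f y = Some b" by blast
  have "directed {x, y}" "is_lub {x, y} y" "{x, y} \<subseteq> dom f"
    using assms(2,3) b unfolding directed_def is_lub_def by auto
  then have "is_lub ((\<lambda>d. the (f d)) ` {x, y}) (the (f y))"
    using f unfolding partial_continuous_def by blast
  then have "a \<le> b" using assms(2) b unfolding is_lub_def by auto
  with b show thesis by (rule that)
qed

text \<open>An open set is upward closed, so a directed set meeting it has a cofinal part inside it.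
  This is how directed sets are moved into the domain of a partial map.\<close>

lemma directed_Int_scott_open:
  assumes U: "scott_open U" and D: "directed D" and "D \<inter> U \<noteq> {}"
  shows "directed (D \<inter> U)"
  unfolding directed_def
proof (intro conjI ballI)
  fix u v assume uv: "u \<in> D \<inter> U" "v \<in> D \<inter> U"
  then obtain z where "z \<in> D" "u \<le> z" "v \<le> z" using D unfolding directed_def by blast
  then show "\<exists>z\<in>D \<inter> U. u \<le> z \<and> v \<le> z" using U uv scott_open_upward by blast
qed (use assms in simp)

lemma is_lub_Int_scott_open:
  assumes U: "scott_open U" and D: "directed D" and lub: "is_lub D x" and d0: "d0 \<in> D \<inter> U"
  shows "is_lub (D \<inter> U) x"
  unfolding is_lub_def
proof (intro conjI allI impI ballI)
  fix d assume "d \<in> D \<inter> U" then show "d \<le> x" using lub unfolding is_lub_def by blast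
next
  fix u assume ub: "\<forall>d\<in>D \<inter> U. d \<le> u"
  have "d \<le> u" if "d \<in> D" for d
  proof -
    obtain z where "z \<in> D" "d \<le> z" "d0 \<le> z"
      using D d0 \<open>d \<in> D\<close> unfolding directed_def by blast
    then have "z \<in> D \<inter> U" using U d0 scott_open_upward by blast
    then show "d \<le> u" using ub \<open>d \<le> z\<close> order_trans by blast
  qed
  then show "x \<le> u" using lub unfolding is_lub_def by blast
qed

lemma directed_image_partial_continuous:
  assumes f: "partial_continuous f" and D: "directed D" "D \<subseteq> dom f"
  shows "directed ((\<lambda>d. the (f d)) ` D)"
  unfolding directed_def
proof (intro conjI ballI)
  show "(\<lambda>d. the (f d)) ` D \<noteq> {}" using D unfolding directed_def by blast
next
  fix p q assume "p \<in> (\<lambda>d. the (f d)) ` D" "q \<in> (\<lambda>d. the (f d)) ` D"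
  then obtain u v where uv: "u \<in> D" "v \<in> D" "p = the (f u)" "q = the (f v)" by blast
  then obtain z where z: "z \<in> D" "u \<le> z" "v \<le> z" using D unfolding directed_def by blast
  obtain pu qv where pu: "f u = Some pu" and qv: "f v = Some qv" using uv D by blast
  obtain b where "f z = Some b" "pu \<le> b" using partial_continuous_mono[OF f pu z(2)] .
  moreover obtain b' where "f z = Some b'" "qv \<le> b'" using partial_continuous_mono[OF f qv z(3)] .
  ultimately have "p \<le> the (f z)" "q \<le> the (f z)" using uv pu qv by auto
  then show "\<exists>r\<in>(\<lambda>d. the (f d)) ` D. p \<le> r \<and> q \<le> r" using z(1) by blast
qed

lemma scott_open_vimage_partial_continuous:
  assumes f: "partial_continuous f" and U: "scott_open U"
  shows "scott_open {x. \<exists>a. f x = Some a \<and> a \<in> U}" (is "scott_open ?V")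
  unfolding scott_open_def
proof (intro conjI ballI allI impI)
  fix x y assume "x \<in> ?V" "x \<le> y"
  then obtain a where a: "f x = Some a" "a \<in> U" by blast
  obtain b where "f y = Some b" "a \<le> b" using partial_continuous_mono[OF f a(1) \<open>x \<le> y\<close>] .
  then show "y \<in> ?V" using U a(2) scott_open_upward by blast
next
  fix D x assume D: "directed D" and lub: "is_lub D x" and "x \<in> ?V"
  then obtain a where a: "f x = Some a" "a \<in> U" by blast
  have dom: "scott_open (dom f)" using f unfolding partial_continuous_def by blast
  then obtain d0 where d0: "d0 \<in> D \<inter> dom f"
    using scott_open_meets_directed D lub a(1) by blast
  have DU: "directed (D \<inter> dom f)" using directed_Int_scott_open[OF dom D] d0 by blast
  have "is_lub (D \<inter> dom f) x" using is_lub_Int_scott_open[OF dom D lub d0] .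
  then have "is_lub ((\<lambda>d. the (f d)) ` (D \<inter> dom f)) (the (f x))"
    using f DU unfolding partial_continuous_def by blast
  then have "is_lub ((\<lambda>d. the (f d)) ` (D \<inter> dom f)) a" using a(1) by simp
  moreover have "directed ((\<lambda>d. the (f d)) ` (D \<inter> dom f))"
    using directed_image_partial_continuous[OF f DU] by blast
  ultimately have "(\<lambda>d. the (f d)) ` (D \<inter> dom f) \<inter> U \<noteq> {}"
    using scott_open_meets_directed[OF U] a(2) by blast
  then show "D \<inter> ?V \<noteq> {}" by auto
qed

lemma scott_closed_vimage_partial_continuous:
  assumes "partial_continuous f" and "scott_closed C"
  shows "scott_closed {x. \<forall>a. f x = Some a \<longrightarrow> a \<in> C}"
proof -
  have "- {x. \<forall>a. f x = Some a \<longrightarrow> a \<in> C} = {x. \<exists>a. f x = Some a \<and> a \<in> - C}" by auto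
  moreover have "scott_open {x. \<exists>a. f x = Some a \<and> a \<in> - C}"
    using assms unfolding scott_closed_def by (rule scott_open_vimage_partial_continuous)
  ultimately show ?thesis unfolding scott_closed_def by simp
qed

lemma step_closed_scott_cl:
  assumes cont: "\<And>f. f \<in> F \<Longrightarrow> partial_continuous f"
    and B: "\<And>x y. x \<in> B \<Longrightarrow> (x, y) \<in> step_rel F \<Longrightarrow> y \<in> B"
    and x: "x \<in> scott_cl B" and xy: "(x, y) \<in> step_rel F"
  shows "y \<in> scott_cl B"
proof -
  obtain f where f: "f \<in> F" "f x = Some y" using xy unfolding step_rel_def by blast
  let ?P = "{x. \<forall>a. f x = Some a \<longrightarrow> a \<in> scott_cl B}"
  have "B \<subseteq> ?P"
  proof (intro subsetI CollectI allI impI)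
    fix b a assume "b \<in> B" "f b = Some a"
    then have "a \<in> B" using B f(1) unfolding step_rel_def by blast
    then show "a \<in> scott_cl B" using scott_cl_subset by blast
  qed
  then have "scott_cl B \<subseteq> ?P"
    by (intro scott_cl_least scott_closed_vimage_partial_continuous cont f(1) scott_closed_scott_cl)
  then show ?thesis using x f(2) by blast
qed

lemma post_star_subset:
  assumes A: "A \<subseteq> C" and C: "\<And>x y. x \<in> C \<Longrightarrow> (x, y) \<in> step_rel F \<Longrightarrow> y \<in> C"
  shows "post_star F A \<subseteq> C"
proof
  fix y assume "y \<in> post_star F A"
  then obtain x where "x \<in> A" and "(x, y) \<in> (step_rel F)\<^sup>*" unfolding post_star_def by blast
  from this(2) show "y \<in> C"
  proof (induction rule: rtrancl_induct)
    case base show ?case using A \<open>x \<in> A\<close> by blast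
  next
    case (step y z) then show ?case using C by blast
  qed
qed

lemma post_star_step_closed:
  "x \<in> post_star F A \<Longrightarrow> (x, y) \<in> step_rel F \<Longrightarrow> y \<in> post_star F A"
  unfolding post_star_def by (blast intro: rtrancl_into_rtrancl)

lemma subset_post_star: "A \<subseteq> post_star F A"
  unfolding post_star_def by blast

theorem lemma5p2:
  fixes F :: "('a::order \<Rightarrow> 'a option) set" and A :: "'a set"
  assumes "complete_functional_wsts F"
  shows "post_star F (scott_cl A) \<subseteq> scott_cl (post_star F A)"
proof (rule post_star_subset)
  show "scott_cl A \<subseteq> scott_cl (post_star F A)"
    by (rule scott_cl_mono[OF subset_post_star])
  have cont: "\<And>f. f \<in> F \<Longrightarrow> partial_continuous f"
    using assms unfolding complete_functional_wsts_def by blast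
  show "y \<in> scott_cl (post_star F A)"
    if "x \<in> scott_cl (post_star F A)" "(x, y) \<in> step_rel F" for x y
    using step_closed_scott_cl[OF cont post_star_step_closed that] .
qed

end
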